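(* Let $d\ge 1$ and let $F,G$ be holomorphic functions on $\mathbb{C}^d$, neither identically zero. Assume there are functions $\varphi_1,\ldots,\varphi_d:\mathbb{R}^{d-1}\to\mathbb{T}$ such that for every $j\in\{1,\ldots,d\}$ and every $x\in\mathbb{R}^d$, $F(x)=\varphi_j(x^{(j)})G(x)$. Then there exists $c\in\mathbb{T}$ such that $F=cG$ on $\mathbb{C}^d$.
   Context: $\mathbb{T}=\{z\in\mathbb{C}:|z|=1\}$. For $x=(x_1,\ldots,x_d)\in\mathbb{R}^d$ and $j\in\{1,\ldots,d\}$, $x^{(j)}=(x_1,\ldots,x_{j-1},x_{j+1},\ldots,x_d)\in\mathbb{R}^{d-1}$. *)

theory Defs
  imports "HOL-Analysis.Analysis"
begin

definition entire_several :: "(complex ^ 'd \<Rightarrow> complex) \<Rightarrow> bool" where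
  "entire_several F \<longleftrightarrow>
     (\<forall>z. \<exists>D. (F has_derivative D) (at z) \<and> (\<forall>(c::complex) v. D (c *s v) = c * D v))"

definition circle_T :: "complex set" where
  "circle_T = {z. norm z = 1}"

text \<open>x^(j): the vector in R^(d-1) obtained by deleting the j-th coordinate, coordinates
  listed in increasing index order.\<close>
definition delete_coord :: "real ^ ('d::{finite,linorder}) \<Rightarrow> 'd \<Rightarrow> real list" where
  "delete_coord x j = map (\<lambda>i. x $ i) (sorted_list_of_set (UNIV - {j}))"

definition cvec :: "real ^ 'd \<Rightarrow> complex ^ 'd" where
  "cvec x = (\<chi> i. complex_of_real (x $ i))"

end

theory Submission
  imports Defs "HOL-Complex_Analysis.Conformal_Mappings"
begin

text \<open>Let \<open>q = F / G\<close> on a real box where \<open>G\<close> does not vanish. The hypothesis says that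
  \<open>q\<close> does not depend on the \<open>j\<close>-th coordinate, for every \<open>j\<close>; moving one coordinate at a time
  inside the box shows that \<open>q\<close> is a constant \<open>c\<close> of modulus one there. Then \<open>F - c G\<close> is an entire
  function vanishing on a real box, and applying the one-variable identity theorem in each
  coordinate in turn shows that it vanishes on all of \<open>\<complex>\<^sup>d\<close>.\<close>

definition vec_upd :: "'a ^ 'n \<Rightarrow> 'n \<Rightarrow> 'a \<Rightarrow> 'a ^ 'n" where
  "vec_upd z k t = (\<chi> i. if i = k then t else z $ i)"

lemma has_derivative_vec_upd:
  fixes z :: "complex ^ 'n::finite"
  shows "(vec_upd z k has_derivative (\<lambda>h. h *s axis k 1)) (at t)"
proof -
  have "linear (\<lambda>h::complex. h *s (axis k 1 :: complex ^ 'n))"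
    by (auto simp: linear_iff vec_eq_iff algebra_simps)
  then have "bounded_linear (\<lambda>h::complex. h *s (axis k 1 :: complex ^ 'n))"
    using linear_conv_bounded_linear by blast
  then have "((\<lambda>t. t *s axis k 1 + vec_upd z k 0) has_derivative (\<lambda>h. h *s axis k 1)) (at t)"
    by (rule has_derivative_add_const[OF bounded_linear.has_derivative[OF _ has_derivative_ident]])
  also have "(\<lambda>t. t *s axis k 1 + vec_upd z k 0) = vec_upd z k"
    by (auto simp: vec_upd_def vec_eq_iff axis_def)
  finally show ?thesis .
qed

lemma entire_several_holomorphic_vec_upd:
  assumes "entire_several H"
  shows "(\<lambda>t. H (vec_upd z k t)) holomorphic_on UNIV"
proof -
  have "(\<lambda>t. H (vec_upd z k t)) field_differentiable (at t)" for t
  proof -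
    obtain D where D: "(H has_derivative D) (at (vec_upd z k t))" "\<And>(c::complex) v. D (c *s v) = c * D v"
      using assms unfolding entire_several_def by blast
    have "((\<lambda>t. H (vec_upd z k t)) has_derivative (\<lambda>h. D (h *s axis k 1))) (at t)"
      by (rule has_derivative_compose[OF has_derivative_vec_upd D(1)])
    also have "(\<lambda>h. D (h *s axis k 1)) = (*) (D (axis k 1))"
      using D(2) by (auto simp: mult.commute)
    finally show ?thesis
      unfolding field_differentiable_def has_field_derivative_def by blast
  qed
  then show ?thesis
    by (simp add: holomorphic_on_def field_differentiable_at_within)
qed

lemma entire_several_continuous:
  assumes "entire_several H"
  shows "continuous (at z) H"
  using assms has_derivative_continuous unfolding entire_several_def by blast

lemma entire_several_diff_scaled:
  assumes "entire_several F" "entire_several G"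
  shows "entire_several (\<lambda>z. F z - c * G z)"
  unfolding entire_several_def
proof
  fix z
  obtain D1 where D1: "(F has_derivative D1) (at z)" "\<And>(a::complex) v. D1 (a *s v) = a * D1 v"
    using assms(1) unfolding entire_several_def by blast
  obtain D2 where D2: "(G has_derivative D2) (at z)" "\<And>(a::complex) v. D2 (a *s v) = a * D2 v"
    using assms(2) unfolding entire_several_def by blast
  have "((\<lambda>z. F z - c * G z) has_derivative (\<lambda>v. D1 v - c * D2 v)) (at z)"
    by (intro derivative_intros D1(1) D2(1))
  moreover have "\<forall>(a::complex) v. D1 (a *s v) - c * D2 (a *s v) = a * (D1 v - c * D2 v)"
    using D1(2) D2(2) by (simp add: algebra_simps)
  ultimately show "\<exists>D. ((\<lambda>z. F z - c * G z) has_derivative D) (at z) \<and>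
      (\<forall>(a::complex) v. D (a *s v) = a * D v)"
    by blast
qed

lemma continuous_cvec: "continuous (at x) (cvec :: real ^ 'n \<Rightarrow> complex ^ 'n)"
proof -
  have "continuous_on UNIV (\<lambda>x::real ^ 'n. \<chi> i. complex_of_real (x$i))"
    by (intro continuous_intros)
  then show ?thesis
    by (simp add: cvec_def[abs_def] continuous_on_eq_continuous_at)
qed

lemma islimpt_of_real_greaterThanLessThan:
  assumes "a < c" "c < b"
  shows "complex_of_real c islimpt (complex_of_real ` {a<..<b})"
proof (rule islimpt_approachable[THEN iffD2], intro allI impI)
  fix e :: real
  assume "e > 0"
  define y where "y = c + min e (b - c) / 2"
  have "y \<in> {a<..<b}" "y \<noteq> c"
    using assms \<open>e > 0\<close> by (auto simp: y_def min_def field_simps)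
  moreover have "dist (complex_of_real y) (complex_of_real c) < e"
    using assms \<open>e > 0\<close> by (simp add: y_def min_def dist_complex_def norm_of_real flip: of_real_diff)
  ultimately show "\<exists>x'\<in>complex_of_real ` {a<..<b}. x' \<noteq> complex_of_real c \<and> dist x' (complex_of_real c) < e"
    by (intro bexI[of _ "complex_of_real y"]) auto
qed

text \<open>The induction over \<open>K\<close> frees the coordinates in \<open>K\<close> from the real box one at a time,
  each step being the one-variable identity theorem.\<close>
lemma entire_several_eq_0_if_eq_0_on_box:
  fixes H :: "complex ^ 'n::finite \<Rightarrow> complex"
  assumes H: "entire_several H" and "box a b \<noteq> {}"
    and vanish: "\<And>x. x \<in> box a b \<Longrightarrow> H (cvec x) = 0"
  shows "H z = 0"
proof -
  let ?I = "\<lambda>i. complex_of_real ` {a$i<..<b$i}"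
  obtain x where "x \<in> box a b"
    using \<open>box a b \<noteq> {}\<close> by blast
  then have ab: "a$i < b$i" for i
    using less_trans unfolding mem_box_cart by blast
  have "H z = 0" if "finite K" "\<forall>i. i \<notin> K \<longrightarrow> z$i \<in> ?I i" for K z
    using that
  proof (induction K arbitrary: z rule: finite_induct)
    case empty
    have z_real: "z$i \<in> ?I i" for i
      using empty.prems by blast
    have "\<exists>t. a$i < t \<and> t < b$i \<and> z$i = complex_of_real t" for i
      using z_real[of i] greaterThanLessThan_iff by blast
    then obtain t where "\<And>i. a$i < t i \<and> t i < b$i \<and> z$i = complex_of_real (t i)"
      by metis
    then have "cvec (\<chi> i. t i) = z" "(\<chi> i. t i) \<in> box a b"
      by (auto simp: cvec_def vec_eq_iff mem_box_cart)
    then show ?case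
      by (metis vanish)
  next
    case (insert k K)
    have "a$k < (a$k + b$k) / 2" "(a$k + b$k) / 2 < b$k"
      using ab[of k] by auto
    then have "H (vec_upd z k t) = 0" for t
    proof (rule analytic_continuation[OF entire_several_holomorphic_vec_upd[OF H] open_UNIV
          connected_UNIV subset_UNIV UNIV_I islimpt_of_real_greaterThanLessThan])
      fix u
      assume "u \<in> ?I k"
      then show "H (vec_upd z k u) = 0"
        using insert.prems by (intro insert.IH) (auto simp: vec_upd_def)
    qed auto
    moreover have "vec_upd z k (z$k) = z"
      by (simp add: vec_upd_def vec_eq_iff)
    ultimately show ?case
      by metis
  qed
  from this[of UNIV] show ?thesis
    by simp
qed

lemma entire_several_nonzero_on_box:
  fixes G :: "complex ^ 'n::finite \<Rightarrow> complex"
  assumes G: "entire_several G" and "\<exists>z. G z \<noteq> 0"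
  obtains a b where "box a b \<noteq> {}" "\<And>x. x \<in> box a b \<Longrightarrow> G (cvec x) \<noteq> 0"
proof -
  let ?U = "(G \<circ> cvec) -` (- {0})"
  have "0 \<in> box (- 1) (1 :: real ^ 'n)"
    by (simp add: mem_box_cart)
  then have box: "box (- 1) (1 :: real ^ 'n) \<noteq> {}"
    by blast
  have "\<exists>x. G (cvec x) \<noteq> 0"
  proof (rule ccontr)
    assume "\<nexists>x. G (cvec x) \<noteq> 0"
    then have "G z = 0" for z
      by (metis entire_several_eq_0_if_eq_0_on_box[OF G box])
    with assms(2) show False
      by blast
  qed
  then obtain x0 where x0: "x0 \<in> ?U"
    by auto
  have "continuous (at x) (G \<circ> cvec)" for x
    using continuous_at_compose[OF continuous_cvec entire_several_continuous[OF G]] .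
  then have "open ?U"
    by (rule continuous_open_vimage[OF open_Compl[OF closed_singleton]])
  then obtain a b where "box a b \<subseteq> ?U" "x0 \<in> box a b" "\<forall>i\<in>Basis. a \<bullet> i < b \<bullet> i"
    using x0 by (rule open_contains_box)
  then show ?thesis
    by (intro that) auto
qed

lemma coordinatewise_constant_on_box:
  fixes f :: "real ^ 'n::finite \<Rightarrow> 'a"
  assumes step: "\<And>x y k. x \<in> box a b \<Longrightarrow> y \<in> box a b \<Longrightarrow> (\<forall>i. i \<noteq> k \<longrightarrow> x$i = y$i) \<Longrightarrow> f x = f y"
    and "x \<in> box a b" "y \<in> box a b"
  shows "f x = f y"
proof -
  have "f x = f y" if "finite K" "x \<in> box a b" "\<forall>i. i \<notin> K \<longrightarrow> x$i = y$i" for K and x :: "real ^ 'n"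
    using that
  proof (induction K arbitrary: x rule: finite_induct)
    case empty
    then have "x = y"
      by (simp add: vec_eq_iff)
    then show ?case
      by simp
  next
    case (insert k K)
    define x' where "x' = vec_upd x k (y$k)"
    have "x' \<in> box a b"
      using insert.prems \<open>y \<in> box a b\<close> by (auto simp: mem_box_cart x'_def vec_upd_def)
    then have "f x' = f y"
      using insert.prems by (intro insert.IH) (auto simp: x'_def vec_upd_def)
    moreover have "f x = f x'"
      using insert.prems \<open>x' \<in> box a b\<close> by (intro step[of _ _ k]) (auto simp: x'_def vec_upd_def)
    ultimately show ?case
      by simp
  qed
  from this[of UNIV] show ?thesis
    using assms(2) by simp
qed

lemma delete_coord_cong:
  "(\<And>i. i \<noteq> k \<Longrightarrow> x$i = y$i) \<Longrightarrow> delete_coord x k = delete_coord y k"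
  unfolding delete_coord_def by (intro map_cong) auto

lemma length_delete_coord:
  "length (delete_coord (x :: real ^ ('n::{finite,linorder})) j) = CARD('n) - 1"
  by (simp add: delete_coord_def card_Diff_singleton)

theorem mainTheorem7:
  fixes F G :: "complex ^ ('d::{finite,linorder}) \<Rightarrow> complex"
    and \<phi> :: "'d \<Rightarrow> real list \<Rightarrow> complex"
  assumes "entire_several F" and "entire_several G"
    and "\<exists>z. F z \<noteq> 0" and "\<exists>z. G z \<noteq> 0"
    and "\<And>j y. length y = CARD('d) - 1 \<Longrightarrow> \<phi> j y \<in> circle_T"
    and "\<And>j x. F (cvec x) = \<phi> j (delete_coord x j) * G (cvec x)"
  shows "\<exists>c\<in>circle_T. \<forall>z. F z = c * G z"
proof -
  obtain a b where box: "box a b \<noteq> {}" and G: "\<And>x. x \<in> box a b \<Longrightarrow> G (cvec x) \<noteq> 0"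
    using entire_several_nonzero_on_box[OF assms(2,4)] by blast
  then obtain x0 where x0: "x0 \<in> box a b"
    by blast
  define q where "q x = F (cvec x) / G (cvec x)" for x
  have q_\<phi>: "q x = \<phi> j (delete_coord x j)" if "x \<in> box a b" for x j
    using assms(6)[of x j] G[OF that] by (simp add: q_def)
  have q_const: "q x = q x0" if "x \<in> box a b" for x
    by (rule coordinatewise_constant_on_box[OF _ that x0]) (metis q_\<phi> delete_coord_cong)
  define c where "c = q x0"
  have "c \<in> circle_T"
    using assms(5)[OF length_delete_coord] q_\<phi>[OF x0] by (metis c_def)
  moreover have "F z - c * G z = 0" for z
  proof (rule entire_several_eq_0_if_eq_0_on_box[OF entire_several_diff_scaled[OF assms(1,2)] box])
    fix x
    assume "x \<in> box a b"
    then show "F (cvec x) - c * G (cvec x) = 0"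
      using q_const G by (simp add: c_def q_def field_simps)
  qed
  ultimately show ?thesis
    by auto
qed

end
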